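(* Let $\sigma\in S_t$ and $p\in S_k$, and let $m=\min(t-1,k)$. If $\mathrm{red}(p_1\cdots p_m)\neq\mathrm{red}(\sigma_1\cdots\sigma_m)$, then the set $\{1\}$ is reversibly deletable for $p$ with respect to $\{(\sigma,[t-2])\}$ (the vincular pattern $\sigma_1\sigma_2\cdots\sigma_{t-1}\text{-}\sigma_t$).
   Context: $\mathrm{red}(w)$ replaces the $i$-th smallest letter of a word of distinct integers by $i$. A vincular pattern of length $\ell$ is $(\sigma,X)$ with $\sigma\in S_\ell$, $X\subseteq[\ell-1]$; $\pi\in S_n$ contains it if there are $i_1<\dots<i_\ell$ with $\mathrm{red}(\pi_{i_1}\cdots\pi_{i_\ell})=\sigma$ and $i_{x+1}=i_x+1$ for all $x\in X$. For $p\in S_k$ and $w\in[n]^k$ with distinct letters and $\mathrm{red}(w)=p$, $S_n^B(p;w)$ is the set of $B$-avoiding $\pi\in S_n$ with $\pi_i=w_i$ for $i\le k$. $d_R(\pi)$ deletes the entries in positions in $R$ and reduces; for words $d_R(w)$ deletes $w_r$ ($r\in R$) and subtracts from each remaining $w_i$ the number of $r\in R$ with $w_r<w_i$. $R\subseteq[k]$ is reversibly deletable for $p$ w.r.t. $B$ if for every $n$ and every such $w$ with $S_n^B(p;w)\ne\emptyset$, $d_R$ restricts to a bijection $S_n^B(p;w)\to S_{n-|R|}^B(d_R(p);d_R(w))$. *)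

theory Defs
  imports Main
begin

text \<open>Words and permutations are lists of positive naturals; positions in the
paper are 1-based, list indices are 0-based.\<close>

definition perms :: "nat \<Rightarrow> nat list set" where
  "perms n = {\<pi>. length \<pi> = n \<and> distinct \<pi> \<and> set \<pi> = {1..n}}"

text \<open>red(w): replace the i-th smallest letter by i (for words of distinct letters).\<close>
definition red :: "nat list \<Rightarrow> nat list" where
  "red w = map (\<lambda>x. card {y \<in> set w. y \<le> x}) w"

text \<open>A vincular pattern (sigma, X): sigma a permutation, X a subset of [length sigma - 1].\<close>
type_synonym vpattern = "nat list \<times> nat set"

definition contains :: "nat list \<Rightarrow> vpattern \<Rightarrow> bool" where
  "contains \<pi> q \<longleftrightarrow> (\<exists>is. length is = length (fst q) \<and> sorted_wrt (<) is
      \<and> (\<forall>i\<in>set is. i < length \<pi>)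
      \<and> red (map (\<lambda>i. \<pi> ! i) is) = fst q
      \<and> (\<forall>x\<in>snd q. is ! x = is ! (x - 1) + 1))"

definition avoids :: "vpattern set \<Rightarrow> nat list \<Rightarrow> bool" where
  "avoids B \<pi> \<longleftrightarrow> (\<forall>q\<in>B. \<not> contains \<pi> q)"

definition Sset :: "nat \<Rightarrow> vpattern set \<Rightarrow> nat list \<Rightarrow> nat list \<Rightarrow> nat list set" where
  "Sset n B p w = {\<pi> \<in> perms n. avoids B \<pi> \<and> (\<forall>i. 1 \<le> i \<and> i \<le> length p \<longrightarrow> \<pi> ! (i - 1) = w ! (i - 1))}"

definition delpos :: "nat set \<Rightarrow> nat list \<Rightarrow> nat list" where
  "delpos R w = map (\<lambda>i. w ! i) (filter (\<lambda>i. Suc i \<notin> R) [0..<length w])"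

definition dperm :: "nat set \<Rightarrow> nat list \<Rightarrow> nat list" where
  "dperm R \<pi> = red (delpos R \<pi>)"

definition dword :: "nat set \<Rightarrow> nat list \<Rightarrow> nat list" where
  "dword R w = map (\<lambda>i. w ! i - card {r \<in> R. 1 \<le> r \<and> r \<le> length w \<and> w ! (r - 1) < w ! i})
                   (filter (\<lambda>i. Suc i \<notin> R) [0..<length w])"

definition rev_deletable :: "nat set \<Rightarrow> nat list \<Rightarrow> vpattern set \<Rightarrow> bool" where
  "rev_deletable R p B \<longleftrightarrow> R \<subseteq> {1..length p} \<and>
     (\<forall>n w. length w = length p \<and> distinct w \<and> set w \<subseteq> {1..n} \<and> red w = p
        \<and> Sset n B p w \<noteq> {} \<longrightarrow>
        bij_betw (dperm R) (Sset n B p w)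
                 (Sset (n - card R) B (dperm R p) (dword R w)))"

end

theory Submission
  imports Defs
begin

(* Let a = w_1 be the prescribed first letter.  Every \<pi> in S_n^B(p;w)
   has the form a # \<rho>, and deleting the first entry and reducing sends it to
   map (dec a) \<rho>, where dec a lowers the letters above a by one; on the word side
   d_{1}(w) is map (dec a) (tl w) as well.  The inverse map re-inserts a in front and
   raises the letters \<ge> a again (inc a).  Both maps preserve the prefix condition, and
   deleting the first entry cannot create an occurrence of a vincular pattern whose
   adjacency constraints are internal.  The only real issue is that re-inserting a
   might create an occurrence; this is impossible as soon as no occurrence of the
   pattern in a permutation with prefix w can use position 1.  For the pattern
   \<sigma>_1...\<sigma>_{t-1}-\<sigma>_t an occurrence starting at position 1 occupies positions 1..t-1,
   so it would force red(p_1...p_m) = red(\<sigma>_1...\<sigma>_m), which the hypothesis excludes. *)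


section \<open>Reduction\<close>

definition rk :: "nat list \<Rightarrow> nat \<Rightarrow> nat" where
  "rk u x = card {y \<in> set u. y \<le> x}"

lemma red_rk: "red u = map (rk u) u"
  by (simp add: red_def rk_def)

lemma rk_mono: "strict_mono_on (set u) (rk u)"
proof (rule strict_mono_onI)
  fix x y assume "x \<in> set u" "y \<in> set u" "x < y"
  then have "{z \<in> set u. z \<le> x} \<subset> {z \<in> set u. z \<le> y}"
    by (auto simp: psubset_eq) (metis (mono_tags, lifting) leD mem_Collect_eq order_refl)
  then show "rk u x < rk u y" unfolding rk_def by (intro psubset_card_mono) auto
qed

lemma red_map_mono:
  fixes f :: "nat \<Rightarrow> nat"
  assumes "strict_mono_on S f" "set u \<subseteq> S"
  shows "red (map f u) = red u"
proof -
  have inj: "inj_on f (set u)"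
    using strict_mono_on_imp_inj_on[OF assms(1)] assms(2) inj_on_subset by blast
  have card_eq: "card {y \<in> set (map f u). y \<le> f x} = card {y \<in> set u. y \<le> x}"
    if "x \<in> set u" for x
  proof -
    have "{y \<in> set (map f u). y \<le> f x} = f ` {y \<in> set u. y \<le> x}"
      using strict_mono_on_less_eq[OF assms(1)] that assms(2) by auto
    then show ?thesis by (simp add: card_image inj_on_subset[OF inj])
  qed
  show ?thesis unfolding red_def map_map o_def
    by (rule map_cong[OF refl]) (use card_eq in auto)
qed

lemma red_take: "red (take m (red v)) = red (take m v)"
  unfolding red_rk[of v] take_map
  by (rule red_map_mono[OF rk_mono]) (meson set_take_subset)

lemma red_perm: "\<rho> \<in> perms n \<Longrightarrow> red \<rho> = \<rho>"
  unfolding red_def perms_def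
proof (rule map_idI, clarsimp)
  fix x assume "Suc 0 \<le> x" "x \<le> length \<rho>"
  then have "{y. Suc 0 \<le> y \<and> y \<le> length \<rho> \<and> y \<le> x} = {1..x}" by auto
  then show "card {y. Suc 0 \<le> y \<and> y \<le> length \<rho> \<and> y \<le> x} = x" by simp
qed


section \<open>Occurrences of vincular patterns\<close>

definition occ :: "nat list \<Rightarrow> vpattern \<Rightarrow> nat list \<Rightarrow> bool" where
  "occ \<pi> q is \<longleftrightarrow> length is = length (fst q) \<and> sorted_wrt (<) is
      \<and> (\<forall>i\<in>set is. i < length \<pi>)
      \<and> red (map (\<lambda>i. \<pi> ! i) is) = fst q
      \<and> (\<forall>x\<in>snd q. is ! x = is ! (x - 1) + 1)"

lemma contains_occ: "contains \<pi> q \<longleftrightarrow> (\<exists>is. occ \<pi> q is)"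
  unfolding contains_def occ_def by blast

definition proper_patterns :: "vpattern set \<Rightarrow> bool" where
  "proper_patterns B \<longleftrightarrow> (\<forall>q\<in>B. fst q \<noteq> [] \<and> (\<forall>x\<in>snd q. 0 < x \<and> x < length (fst q)))"

lemma contains_map:
  fixes g :: "nat \<Rightarrow> nat"
  assumes "strict_mono_on (set \<rho>) g" "contains (map g \<rho>) q"
  shows "contains \<rho> q"
proof -
  obtain "is" where occ_g: "occ (map g \<rho>) q is"
    using assms(2) contains_occ by blast
  then have idx: "\<forall>i\<in>set is. i < length \<rho>" unfolding occ_def by simp
  have "red (map (\<lambda>i. \<rho> ! i) is) = red (map g (map (\<lambda>i. \<rho> ! i) is))"
    by (rule sym, rule red_map_mono[OF assms(1)]) (use idx in auto)
  also have "map g (map (\<lambda>i. \<rho> ! i) is) = map (\<lambda>i. map g \<rho> ! i) is"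
    using idx by simp
  finally have "occ \<rho> q is" using occ_g unfolding occ_def by simp
  then show ?thesis using contains_occ by blast
qed

lemma contains_red: "contains (red u) q \<Longrightarrow> contains u q"
  unfolding red_rk[of u] by (rule contains_map[OF rk_mono])

lemma contains_Cons:
  assumes "proper_patterns B" "q \<in> B" "contains \<rho> q"
  shows "contains (a # \<rho>) q"
proof -
  have X: "\<forall>x\<in>snd q. 0 < x \<and> x < length (fst q)"
    using assms(1,2) unfolding proper_patterns_def by blast
  obtain "is" where "occ \<rho> q is" using assms(3) contains_occ by blast
  then have "occ (a # \<rho>) q (map Suc is)"
    using X unfolding occ_def by (auto simp: sorted_wrt_map o_def)
  then show ?thesis using contains_occ by blast
qed

lemma contains_unCons:
  assumes "proper_patterns B" "q \<in> B" and occ_a: "occ (a # \<rho>) q is" and nz: "is ! 0 \<noteq> 0"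
  shows "contains \<rho> q"
proof -
  have X: "\<forall>x\<in>snd q. 0 < x \<and> x < length (fst q)"
    using assms(1,2) unfolding proper_patterns_def by blast
  have len: "length is = length (fst q)" and so: "sorted_wrt (<) is"
    using occ_a unfolding occ_def by auto
  have pos: "i \<noteq> 0" if "i \<in> set is" for i
  proof -
    obtain j where j: "j < length is" "i = is ! j"
      using \<open>i \<in> set is\<close> by (auto simp: in_set_conv_nth)
    show ?thesis
    proof (cases j)
      case 0 then show ?thesis using j nz by simp
    next
      case (Suc j') then have "is ! 0 < is ! j" using so j sorted_wrt_nth_less by fastforce
      then show ?thesis using j by simp
    qed
  qed
  have "occ \<rho> q (map (\<lambda>i. i - 1) is)"
    unfolding occ_def
  proof (intro conjI)
    show "length (map (\<lambda>i. i - 1) is) = length (fst q)" using len by simp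
    show "sorted_wrt (<) (map (\<lambda>i. i - 1) is)"
      unfolding sorted_wrt_map
      by (rule sorted_wrt_mono_rel[OF _ so]) (use pos in fastforce)
    show "\<forall>i\<in>set (map (\<lambda>i. i - 1) is). i < length \<rho>"
      using occ_a pos unfolding occ_def by fastforce
    have "map (\<lambda>i. \<rho> ! i) (map (\<lambda>i. i - 1) is) = map (\<lambda>i. (a # \<rho>) ! i) is"
      using pos by (auto simp: nth_Cons')
    also have "red \<dots> = fst q" using occ_a unfolding occ_def by simp
    finally show "red (map (\<lambda>i. \<rho> ! i) (map (\<lambda>i. i - 1) is)) = fst q" .
    show "\<forall>x\<in>snd q. map (\<lambda>i. i - 1) is ! x = map (\<lambda>i. i - 1) is ! (x - 1) + 1"
    proof
      fix x assume x: "x \<in> snd q"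
      then have lt: "x < length is" "x - 1 < length is" using X len by auto
      moreover have "is ! x = is ! (x - 1) + 1" using occ_a x unfolding occ_def by auto
      moreover have "is ! (x - 1) \<noteq> 0" using pos lt by auto
      ultimately show "map (\<lambda>i. i - 1) is ! x = map (\<lambda>i. i - 1) is ! (x - 1) + 1" by simp
    qed
  qed
  then show ?thesis using contains_occ by blast
qed


section \<open>Removing and re-inserting a value\<close>

text \<open>dec a closes the gap left by the value a; inc a reopens it.\<close>
definition dec :: "nat \<Rightarrow> nat \<Rightarrow> nat" where "dec a x = (if x < a then x else x - 1)"
definition inc :: "nat \<Rightarrow> nat \<Rightarrow> nat" where "inc a x = (if x < a then x else x + 1)"

lemma inc_mono: "strict_mono_on S (inc a)"
  by (rule strict_mono_onI) (auto simp: inc_def)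

lemma dec_mono: "strict_mono_on (- {a}) (dec a)"
  by (rule strict_mono_onI) (auto simp: dec_def)

lemma inc_dec: "x \<noteq> a \<Longrightarrow> inc a (dec a x) = x"
  by (auto simp: inc_def dec_def)

lemma red_remove:
  assumes "set \<rho> = {1..n} - {a}" "a \<in> {1..n}"
  shows "red \<rho> = map (dec a) \<rho>"
  unfolding red_def
proof (rule map_cong[OF refl])
  fix x assume "x \<in> set \<rho>"
  then have xa: "x \<noteq> a" "1 \<le> x" "x \<le> n" using assms(1) by auto
  have "{y \<in> set \<rho>. y \<le> x} = {1..x} - {a}" unfolding assms(1) using xa by auto
  moreover have "card ({1..x} - {a}) = dec a x"
  proof (cases "x < a")
    case False
    then have "a \<in> {1..x}" using assms(2) by simp
    then show ?thesis using False by (simp add: dec_def)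
  qed (simp add: dec_def)
  ultimately show "card {y \<in> set \<rho>. y \<le> x} = dec a x" by simp
qed

lemma dec_perm:
  assumes "distinct \<rho>" "set \<rho> = {1..n} - {a}" "length \<rho> = n - 1" "a \<in> {1..n}"
  shows "map (dec a) \<rho> \<in> perms (n - 1)"
proof -
  have "inj_on (dec a) (set \<rho>)"
    using strict_mono_on_imp_inj_on[OF dec_mono] assms(2) inj_on_subset by blast
  moreover have "dec a ` ({1..n} - {a}) = {1..n-1}"
  proof
    show "dec a ` ({1..n} - {a}) \<subseteq> {1..n - 1}" using assms(4) by (auto simp: dec_def)
    show "{1..n - 1} \<subseteq> dec a ` ({1..n} - {a})"
    proof
      fix y assume y: "y \<in> {1..n - 1}"
      show "y \<in> dec a ` ({1..n} - {a})"
      proof (cases "y < a")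
        case True then show ?thesis using y by (intro image_eqI[of _ _ y]) (auto simp: dec_def)
      next
        case False then show ?thesis using y by (intro image_eqI[of _ _ "y + 1"]) (auto simp: dec_def)
      qed
    qed
  qed
  ultimately show ?thesis using assms unfolding perms_def by (simp add: distinct_map)
qed

lemma inc_perm:
  assumes "\<rho> \<in> perms (n - 1)" "a \<in> {1..n}"
  shows "a # map (inc a) \<rho> \<in> perms n"
proof -
  have \<rho>: "length \<rho> = n - 1" "distinct \<rho>" "set \<rho> = {1..n-1}"
    using assms(1) unfolding perms_def by auto
  have "inj_on (inc a) (set \<rho>)" using strict_mono_on_imp_inj_on[OF inc_mono] by blast
  moreover have "a \<notin> inc a ` set \<rho>" by (auto simp: inc_def)
  moreover have "insert a (inc a ` {1..n-1}) = {1..n}"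
  proof
    show "insert a (inc a ` {1..n - 1}) \<subseteq> {1..n}" using assms(2) by (auto simp: inc_def)
    show "{1..n} \<subseteq> insert a (inc a ` {1..n - 1})"
    proof
      fix y assume y: "y \<in> {1..n}"
      consider "y < a" | "y = a" | "a < y" by linarith
      then show "y \<in> insert a (inc a ` {1..n - 1})"
      proof cases
        case 1 then show ?thesis using y assms(2)
          by (intro insertI2 image_eqI[of _ _ y]) (auto simp: inc_def)
      next
        case 3 then show ?thesis using y assms(2)
          by (intro insertI2 image_eqI[of _ _ "y - 1"]) (auto simp: inc_def)
      qed simp
    qed
  qed
  ultimately show ?thesis using \<rho> assms(2) unfolding perms_def by (auto simp: distinct_map)
qed


section \<open>Deleting the first entry\<close>

lemma filter_not_first: "filter (\<lambda>i. Suc i \<notin> {1}) [0..<L] = [1..<L]"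
  by (induction L) auto

lemma delpos_first: "delpos {1} xs = tl xs"
  unfolding delpos_def filter_not_first
  by (rule nth_equalityI) (auto simp: nth_tl)

lemma dperm_first:
  assumes "set \<rho> = {1..n} - {a}" "a \<in> {1..n}"
  shows "dperm {1} (a # \<rho>) = map (dec a) \<rho>"
  unfolding dperm_def delpos_first using red_remove[OF assms] by simp

lemma dword_first:
  assumes "distinct w" "w \<noteq> []"
  shows "dword {1} w = map (dec (w ! 0)) (tl w)"
proof (rule nth_equalityI)
  show "length (dword {1} w) = length (map (dec (w ! 0)) (tl w))"
    unfolding dword_def filter_not_first by simp
  fix j assume "j < length (dword {1} w)"
  then have j: "Suc j < length w" unfolding dword_def filter_not_first by simp
  then have ne: "w ! Suc j \<noteq> w ! 0"
    using nth_eq_iff_index_eq[OF assms(1) j less_trans[OF zero_less_Suc j]] by simp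
  have "{r \<in> {1}. 1 \<le> r \<and> r \<le> length w \<and> w ! (r - 1) < w ! Suc j}
      = (if w ! 0 < w ! Suc j then {1} else {})" using j by auto
  then show "dword {1} w ! j = map (dec (w ! 0)) (tl w) ! j"
    unfolding dword_def filter_not_first using j ne by (auto simp: dec_def nth_tl)
qed

lemma Sset_iff:
  "\<pi> \<in> Sset n B p w \<longleftrightarrow> \<pi> \<in> perms n \<and> avoids B \<pi> \<and> (\<forall>j<length p. \<pi> ! j = w ! j)"
proof -
  have "(\<forall>i. 1 \<le> i \<and> i \<le> length p \<longrightarrow> \<pi> ! (i - 1) = w ! (i - 1))
        \<longleftrightarrow> (\<forall>j<length p. \<pi> ! j = w ! j)"
  proof
    assume H: "\<forall>i. 1 \<le> i \<and> i \<le> length p \<longrightarrow> \<pi> ! (i - 1) = w ! (i - 1)"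
    show "\<forall>j<length p. \<pi> ! j = w ! j" using H[rule_format, of "Suc _"] by simp
  qed auto
  then show ?thesis unfolding Sset_def by simp
qed

lemma distinct_length_le:
  assumes "distinct w" "set w \<subseteq> {1..n}"
  shows "length w \<le> n"
proof -
  have "card (set w) \<le> card {1..n}" using assms(2) by (intro card_mono) auto
  then show ?thesis using distinct_card[OF assms(1)] by simp
qed

lemma Sset_first:
  assumes "\<pi> \<in> Sset n B p w" "p \<noteq> []" "0 < n"
  obtains \<rho> where "\<pi> = w ! 0 # \<rho>" "distinct \<rho>" "set \<rho> = {1..n} - {w ! 0}" "length \<rho> = n - 1"
proof -
  have \<pi>: "\<pi> \<in> perms n" "\<pi> ! 0 = w ! 0" using assms unfolding Sset_iff by auto
  moreover have "\<pi> \<noteq> []" using \<pi>(1) assms(3) unfolding perms_def by auto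
  ultimately obtain \<rho> where e: "\<pi> = w ! 0 # \<rho>" by (cases \<pi>) auto
  have "distinct (w ! 0 # \<rho>)" "set (w ! 0 # \<rho>) = {1..n}" "length (w ! 0 # \<rho>) = n"
    using \<pi>(1) unfolding e perms_def by auto
  moreover from this have "set \<rho> = {1..n} - {w ! 0}"
    by (metis Diff_insert_absorb distinct.simps(2) list.simps(15))
  ultimately show ?thesis using that e by auto
qed


section \<open>The first-letter deletion bijection\<close>

definition first_free :: "vpattern set \<Rightarrow> nat list \<Rightarrow> bool" where
  "first_free B w \<longleftrightarrow>
     (\<forall>\<pi> q is. q \<in> B \<and> (\<forall>j<length w. \<pi> ! j = w ! j) \<and> occ \<pi> q is \<longrightarrow> is ! 0 \<noteq> 0)"

text \<open>Deleting the first entry maps S_n^B(p;w) into the target set: avoidance survives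
  because every occurrence in the tail is one in \<pi>.\<close>
lemma delete_first_into:
  assumes B: "proper_patterns B" and \<pi>: "\<pi> \<in> Sset n B p w"
    and w: "length w = length p" "distinct w" "p \<noteq> []" "set w \<subseteq> {1..n}"
  shows "dperm {1} \<pi> \<in> Sset (n - 1) B (dperm {1} p) (dword {1} w)"
proof -
  let ?a = "w ! 0"
  obtain \<rho> where \<rho>: "\<pi> = ?a # \<rho>" "distinct \<rho>" "set \<rho> = {1..n} - {?a}" "length \<rho> = n - 1"
    using Sset_first[OF \<pi> w(3)] w distinct_length_le[OF w(2,4)] by auto
  have P: "\<pi> \<in> perms n" "avoids B \<pi>" "\<forall>j<length p. \<pi> ! j = w ! j"
    using \<pi> unfolding Sset_iff by auto
  have a: "?a \<in> {1..n}" using P(1) \<rho>(1) unfolding perms_def by auto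
  have image: "dperm {1} \<pi> = map (dec ?a) \<rho>" using dperm_first[OF \<rho>(3) a] \<rho>(1) by simp
  have "avoids B (dperm {1} \<pi>)"
    unfolding avoids_def
  proof (intro ballI notI)
    fix q assume q: "q \<in> B" and "contains (dperm {1} \<pi>) q"
    then have "contains \<rho> q" unfolding dperm_def delpos_first \<rho>(1) by (simp add: contains_red)
    then have "contains \<pi> q" using contains_Cons[OF B q] \<rho>(1) by simp
    then show False using P(2) q unfolding avoids_def by blast
  qed
  moreover have "\<forall>j<length (dperm {1} p). dperm {1} \<pi> ! j = dword {1} w ! j"
  proof (intro allI impI)
    fix j assume "j < length (dperm {1} p)"
    then have j: "Suc j < length p" unfolding dperm_def red_def delpos_first by simp
    then have "\<rho> ! j = w ! Suc j" using P(3) \<rho>(1) by auto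
    moreover have "j < length \<rho>" using j \<rho>(4) w(1) distinct_length_le[OF w(2,4)] by simp
    moreover have "w \<noteq> []" using w(1,3) by auto
    ultimately show "dperm {1} \<pi> ! j = dword {1} w ! j"
      using image dword_first[OF w(2)] j w(1) by (auto simp: nth_tl)
  qed
  ultimately show ?thesis
    unfolding Sset_iff using image dec_perm[OF \<rho>(2-4) a] by simp
qed

text \<open>The inverse map re-inserts w_1 in front; avoidance is kept thanks to first_free.\<close>
lemma insert_first_into:
  assumes B: "proper_patterns B"
    and free: "first_free B w"
    and \<rho>: "\<rho> \<in> Sset (n - 1) B (dperm {1} p) (dword {1} w)"
    and w: "length w = length p" "distinct w" "p \<noteq> []" "set w \<subseteq> {1..n}"
  shows "w ! 0 # map (inc (w ! 0)) \<rho> \<in> Sset n B p w"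
proof -
  let ?a = "w ! 0"
  let ?\<pi> = "?a # map (inc ?a) \<rho>"
  have a: "?a \<in> {1..n}" using w by (metis length_greater_0_conv nth_mem subsetD)
  have R: "\<rho> \<in> perms (n - 1)" "avoids B \<rho>"
      "\<forall>j<length (dperm {1} p). \<rho> ! j = dword {1} w ! j"
    using \<rho> unfolding Sset_iff by auto
  have prefix: "\<forall>j<length w. ?\<pi> ! j = w ! j"
  proof (intro allI impI)
    fix j assume j: "j < length w"
    show "?\<pi> ! j = w ! j"
    proof (cases j)
      case (Suc j')
      have "length w \<le> n" using distinct_length_le[OF w(2,4)] .
      then have j': "j' < length \<rho>" "j' < length (dperm {1} p)" "Suc j' < length w"
        using R(1) Suc j w(1) unfolding perms_def dperm_def red_def delpos_first by auto
      have "w ! Suc j' \<noteq> ?a"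
        using nth_eq_iff_index_eq[OF w(2) j'(3) less_trans[OF zero_less_Suc j'(3)]] by simp
      moreover have "w \<noteq> []" using w(1,3) by auto
      ultimately have "inc ?a (dword {1} w ! j') = w ! Suc j'"
        using dword_first[OF w(2)] j'(3) inc_dec by (auto simp: nth_tl)
      then show ?thesis using Suc j' R(3) by simp
    qed simp
  qed
  have "avoids B ?\<pi>"
    unfolding avoids_def
  proof (intro ballI notI)
    fix q assume q: "q \<in> B" and "contains ?\<pi> q"
    then obtain "is" where o: "occ ?\<pi> q is" using contains_occ by blast
    have "contains (map (inc ?a) \<rho>) q"
      using contains_unCons[OF B q o] free q prefix o unfolding first_free_def by blast
    then have "contains \<rho> q" using contains_map[OF inc_mono] by blast
    then show False using R(2) q unfolding avoids_def by blast
  qed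
  then show ?thesis unfolding Sset_iff using inc_perm[OF R(1) a] prefix w(1) by simp
qed

lemma delete_first_bij:
  assumes B: "proper_patterns B"
    and free: "first_free B w"
    and w: "length w = length p" "distinct w" "p \<noteq> []" "set w \<subseteq> {1..n}"
  shows "bij_betw (dperm {1}) (Sset n B p w) (Sset (n - 1) B (dperm {1} p) (dword {1} w))"
proof (rule bij_betw_byWitness[where f' = "\<lambda>\<rho>. w ! 0 # map (inc (w ! 0)) \<rho>"])
  let ?a = "w ! 0"
  show "\<forall>\<pi>\<in>Sset n B p w. ?a # map (inc ?a) (dperm {1} \<pi>) = \<pi>"
  proof
    fix \<pi> assume \<pi>: "\<pi> \<in> Sset n B p w"
    obtain \<rho> where \<rho>: "\<pi> = ?a # \<rho>" "distinct \<rho>" "set \<rho> = {1..n} - {?a}" "length \<rho> = n - 1"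
      using Sset_first[OF \<pi> w(3)] w distinct_length_le[OF w(2,4)] by auto
    have a: "?a \<in> {1..n}" using w by (metis length_greater_0_conv nth_mem subsetD)
    have "map (inc ?a) (map (dec ?a) \<rho>) = \<rho>"
      unfolding map_map o_def by (rule map_idI) (use \<rho>(3) inc_dec in auto)
    then show "?a # map (inc ?a) (dperm {1} \<pi>) = \<pi>" using dperm_first[OF \<rho>(3) a] \<rho>(1) by simp
  qed
  show "\<forall>\<rho>\<in>Sset (n - 1) B (dperm {1} p) (dword {1} w). dperm {1} (?a # map (inc ?a) \<rho>) = \<rho>"
  proof
    fix \<rho> assume "\<rho> \<in> Sset (n - 1) B (dperm {1} p) (dword {1} w)"
    then have "red \<rho> = \<rho>" using red_perm unfolding Sset_iff by blast
    then show "dperm {1} (?a # map (inc ?a) \<rho>) = \<rho>"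
      unfolding dperm_def delpos_first using red_map_mono[OF inc_mono order_refl] by simp
  qed
  show "dperm {1} ` Sset n B p w \<subseteq> Sset (n - 1) B (dperm {1} p) (dword {1} w)"
    using delete_first_into[OF B _ w] by blast
  show "(\<lambda>\<rho>. ?a # map (inc ?a) \<rho>) ` Sset (n - 1) B (dperm {1} p) (dword {1} w) \<subseteq> Sset n B p w"
    using insert_first_into[OF B free _ w] by blast
qed


section \<open>The pattern \<sigma>_1...\<sigma>_{t-1}-\<sigma>_t\<close>

text \<open>An occurrence of \<sigma>_1...\<sigma>_{t-1}-\<sigma>_t starting at the first position occupies the
  positions 1..t-1, so its first m letters are those of w; this contradicts the
  hypothesis red(p_1...p_m) \<noteq> red(\<sigma>_1...\<sigma>_m).\<close>
lemma occurrence_avoids_first: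
  assumes "length \<sigma> = t" "m \<le> t - 1" "m \<le> length w" "red (take m (red w)) \<noteq> red (take m \<sigma>)"
    "\<forall>j<length w. \<pi> ! j = w ! j" "occ \<pi> (\<sigma>, {1..t-2}) is"
  shows "is ! 0 \<noteq> 0"
proof
  assume z: "is ! 0 = 0"
  have h: "length is = t" "red (map (\<lambda>i. \<pi> ! i) is) = \<sigma>"
    "\<forall>x\<in>{1..t-2}. is ! x = is ! (x - 1) + 1" using assms(1,6) unfolding occ_def by auto
  have consecutive: "j \<le> t - 2 \<Longrightarrow> is ! j = j" for j
  proof (induction j)
    case (Suc j) then show ?case using h(3) by force
  qed (use z in simp)
  define v where "v = map (\<lambda>i. \<pi> ! i) is"
  have "take m v = take m w"
  proof (rule nth_equalityI)
    show "length (take m v) = length (take m w)" using assms h(1) unfolding v_def by simp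
    fix j assume "j < length (take m v)"
    then have j: "j < m" "j < t" using h(1) by (auto simp: v_def)
    then have "j \<le> t - 2" using assms(2) by linarith
    then show "take m v ! j = take m w ! j" using j consecutive assms(3,5) h(1) by (simp add: v_def)
  qed
  then have "red (take m \<sigma>) = red (take m (red w))"
    using red_take[of m v] red_take[of m w] h(2) unfolding v_def by metis
  then show False using assms(4) by simp
qed

theorem mainTheorem5:
  fixes \<sigma> p :: "nat list" and t k m :: nat
  assumes "\<sigma> \<in> perms t" and "p \<in> perms k" and "m = min (t - 1) k"
    and "red (take m p) \<noteq> red (take m \<sigma>)"
  shows "rev_deletable {1} p {(\<sigma>, {1..t - 2})}"
proof -
  have ls: "length \<sigma> = t" and lp: "length p = k"
    using assms(1,2) unfolding perms_def by auto
  have "m \<noteq> 0" using assms(4) by (metis take_0)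
  then have "p \<noteq> []" "2 \<le> t" using assms(3) lp by auto
  then have B: "proper_patterns {(\<sigma>, {1..t - 2})}"
    unfolding proper_patterns_def using ls by auto
  show ?thesis unfolding rev_deletable_def
  proof (intro conjI allI impI)
    show "{1} \<subseteq> {1..length p}" using \<open>p \<noteq> []\<close> by (cases p) auto
    fix n w
    assume w: "length w = length p \<and> distinct w \<and> set w \<subseteq> {1..n} \<and> red w = p
      \<and> Sset n {(\<sigma>, {1..t - 2})} p w \<noteq> {}"
    have m: "m \<le> t - 1" "m \<le> length w" "red (take m (red w)) \<noteq> red (take m \<sigma>)"
      using assms(3,4) w lp by auto
    have "first_free {(\<sigma>, {1..t - 2})} w"
      unfolding first_free_def using occurrence_avoids_first[OF ls m] by blast
    then show "bij_betw (dperm {1}) (Sset n {(\<sigma>, {1..t - 2})} p w)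
        (Sset (n - card {1}) {(\<sigma>, {1..t - 2})} (dperm {1} p) (dword {1} w))"
      using delete_first_bij[OF B _ _ _ \<open>p \<noteq> []\<close>] w by auto
  qed
qed

end
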